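(* Let $a\ge2$ and $0\le\mu\le a-1$ be integers and $u\in\mathbb R$. For an integer $0\le j\le a-1$ and real $v$ let $$I_{n,j}(v)=\frac1{2\pi i}\int_L\frac{n!^a}{\Gamma^{a-1}(t+1)\Gamma^a(n-t+1)}\Bigl(\frac{\pi}{\sin\pi t}\Bigr)^{j+1}e^{i\pi tv}\,dt,$$ where $L$ is a loop beginning and ending at $-\infty$ and encircling the points $n,n-1,n-2,\ldots$ once in the positive direction. Then for each $n=0,1,2,\ldots$ $$I_{n,\mu}(u)=\frac1{(2\pi i)^{a-\mu-1}}\sum_{k=0}^{a-\mu-1}(-1)^k\binom{a-\mu-1}{k}I_{n,a-1}(a+u-\mu-1-2k).$$ *)

theory Defs
  imports "HOL-Complex_Analysis.Complex_Analysis"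
begin

definition integrandI :: "nat \<Rightarrow> nat \<Rightarrow> nat \<Rightarrow> real \<Rightarrow> complex \<Rightarrow> complex" where
  "integrandI a n j v t =
     of_nat (fact n) ^ a / (Gamma (t + 1) ^ (a - 1) * Gamma (of_nat n - t + 1) ^ a)
     * (of_real pi / sin (of_real pi * t)) ^ (j + 1)
     * exp (\<i> * of_real pi * t * of_real v)"

text \<open>Truncation at real part -R of the concrete loop L: it comes in from -infinity along
  Im t = -1/2, goes up along Re t = n + 1/2 and returns to -infinity along Im t = 1/2,
  i.e. it encircles n, n-1, n-2, ... once in the positive (counterclockwise) direction.\<close>
definition loopL :: "nat \<Rightarrow> real \<Rightarrow> real \<Rightarrow> complex" where
  "loopL n R =
     linepath (Complex (-R) (-1/2)) (Complex (real n + 1/2) (-1/2)) +++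
     linepath (Complex (real n + 1/2) (-1/2)) (Complex (real n + 1/2) (1/2)) +++
     linepath (Complex (real n + 1/2) (1/2)) (Complex (-R) (1/2))"

definition Iint :: "nat \<Rightarrow> nat \<Rightarrow> nat \<Rightarrow> real \<Rightarrow> complex" where
  "Iint a n j v = (1 / (2 * of_real pi * \<i>)) *
     Lim at_top (\<lambda>R. contour_integral (loopL n R) (integrandI a n j v))"

end

theory Submission
  imports Defs
begin

text \<open>Write \<open>m = a - \<mu> - 1\<close>. Since \<open>e^{i\<pi>t(m+u-2k)} = e^{i\<pi>tu} X^{m-k} Y^k\<close> with
  \<open>X = e^{i\<pi>t}\<close>, \<open>Y = e^{-i\<pi>t}\<close>, the binomial theorem turns the alternating sum of the
  integrands for \<open>j = a - 1\<close> into \<open>e^{i\<pi>tu} (X - Y)^m = e^{i\<pi>tu} (2i sin \<pi>t)^m\<close> times the common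
  factor, and \<open>(2i sin \<pi>t)^m\<close> cancels \<open>m\<close> of the \<open>a\<close> factors \<open>\<pi>/sin \<pi>t\<close>: the identity holds
  already for the integrands. It passes to the improper loop integrals by linearity once the
  integrals for \<open>j = a - 1\<close> are known to converge. For these, the reflection formula gives
  \<open>\<pi> / (\<Gamma>(t+1)\<Gamma>(n-t+1) sin \<pi>t) = -1 / pochhammer (-t) (n+1)\<close>, so on the horizontal rays \<open>Im t = \<plusminus>1/2\<close> the
  integrand is \<open>O(1/(Re t)\<^sup>2)\<close> as \<open>Re t \<rightarrow> -\<infinity>\<close>.\<close>

lemma integrandI_rGamma:
  "integrandI a n j v = (\<lambda>t. of_nat (fact n) ^ a * rGamma (t + 1) ^ (a - 1) * rGamma (of_nat n - t + 1) ^ a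
     * (of_real pi / sin (of_real pi * t)) ^ (j + 1) * exp (\<i> * of_real pi * t * of_real v))"
  unfolding integrandI_def Gamma_def
  by (simp add: fun_eq_iff divide_inverse power_inverse inverse_mult_distrib mult.assoc)

lemma binomial_ring_diff:
  fixes x y :: "'a :: comm_ring_1"
  shows "(x - y) ^ m = (\<Sum>k = 0..m. (-1) ^ k * of_nat (m choose k) * (x ^ (m - k) * y ^ k))"
proof -
  have "(x - y) ^ m = (- y + x) ^ m" by simp
  also have "\<dots> = (\<Sum>k\<le>m. of_nat (m choose k) * (- y) ^ k * x ^ (m - k))"
    by (rule binomial_ring)
  finally show ?thesis
    by (simp add: atLeast0AtMost power_minus[of y] mult_ac)
qed

lemma exp_diff_eq_sin: "exp (\<i> * z) - exp (- (\<i> * z)) = 2 * \<i> * sin z"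
  by (simp add: sin_exp_eq)

lemma sum_binomial_exp_pi:
  fixes u :: real and t :: complex
  shows "(\<Sum>k = 0..m. (-1) ^ k * of_nat (m choose k) *
            exp (\<i> * of_real pi * t * of_real (real m + u - 2 * real k)))
       = exp (\<i> * of_real pi * t * of_real u) * (2 * \<i> * sin (of_real pi * t)) ^ m"
proof -
  define z where "z = \<i> * of_real pi * t"
  have shift: "exp (z * of_real (real m + u - 2 * real k)) = exp (z * of_real u) * (exp z ^ (m - k) * exp (- z) ^ k)"
    if "k \<le> m" for k
  proof -
    have "z * of_real (real m + u - 2 * real k) = z * of_real u + (of_nat (m - k) * z + of_nat k * (- z))"
      using that by (simp add: of_nat_diff algebra_simps)
    then show ?thesis by (simp only: exp_add exp_of_nat_mult)
  qed
  have "(\<Sum>k = 0..m. (-1) ^ k * of_nat (m choose k) * exp (z * of_real (real m + u - 2 * real k)))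
      = exp (z * of_real u) * (exp z - exp (- z)) ^ m"
    unfolding binomial_ring_diff sum_distrib_left
  proof (intro sum.cong refl)
    fix k assume "k \<in> {0..m}"
    then show "(-1) ^ k * of_nat (m choose k) * exp (z * of_real (real m + u - 2 * real k))
        = exp (z * of_real u) * ((-1) ^ k * of_nat (m choose k) * (exp z ^ (m - k) * exp (- z) ^ k))"
      using shift[of k] by (simp add: mult_ac)
  qed
  also have "exp z - exp (- z) = 2 * \<i> * sin (of_real pi * t)"
    unfolding z_def using exp_diff_eq_sin[of "of_real pi * t"] by (simp add: mult.assoc)
  finally show ?thesis unfolding z_def .
qed

lemma integrandI_binomial_identity:
  fixes a \<mu> n :: nat and u :: real
  assumes "\<mu> < a"
  shows "integrandI a n \<mu> u t = 1 / (2 * of_real pi * \<i>) ^ (a - \<mu> - 1) *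
    (\<Sum>k = 0..a - \<mu> - 1. (-1) ^ k * of_nat ((a - \<mu> - 1) choose k) *
        integrandI a n (a - 1) (real a + u - real \<mu> - 1 - 2 * real k) t)"
proof -
  define m where "m = a - \<mu> - 1"
  define s where "s = sin (of_real pi * t)"
  define q where "q = of_real pi / s"
  define G where "G = of_nat (fact n) ^ a * rGamma (t + 1) ^ (a - 1) * rGamma (of_nat n - t + 1) ^ a"
  define E where "E = (\<lambda>v::real. exp (\<i> * of_real pi * t * of_real v))"
  have a: "a = \<mu> + 1 + m" and a1: "a - 1 + 1 = a"
    using assms unfolding m_def by simp_all
  have integrand: "integrandI a n j v t = G * q ^ (j + 1) * E v" for j v
    unfolding integrandI_rGamma G_def q_def s_def E_def ..
  have "(\<Sum>k = 0..m. (-1) ^ k * of_nat (m choose k) *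
          integrandI a n (a - 1) (real a + u - real \<mu> - 1 - 2 * real k) t)
      = G * q ^ a * (\<Sum>k = 0..m. (-1) ^ k * of_nat (m choose k) * E (real m + u - 2 * real k))"
    unfolding integrand a1 sum_distrib_left
    by (intro sum.cong refl) (simp add: a mult_ac)
  also have "\<dots> = G * E u * (q ^ a * (2 * \<i> * s) ^ m)"
    unfolding E_def s_def sum_binomial_exp_pi by (simp only: mult_ac)
  also have "q ^ a * (2 * \<i> * s) ^ m = q ^ (\<mu> + 1) * (2 * of_real pi * \<i>) ^ m"
  proof (cases "s = 0")
    case True
    then show ?thesis by (simp add: q_def a)
  next
    case False
    then have cancel: "q * (2 * \<i> * s) = 2 * of_real pi * \<i>"
      by (simp add: q_def)
    have "q ^ a * (2 * \<i> * s) ^ m = q ^ (\<mu> + 1) * (q * (2 * \<i> * s)) ^ m"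
      unfolding a power_add power_mult_distrib by (simp only: mult_ac)
    then show ?thesis unfolding cancel .
  qed
  finally show ?thesis
    unfolding m_def[symmetric] integrand by (simp add: field_simps)
qed

lemma sin_pi_times_eq_0_iff:
  fixes t :: complex
  shows "sin (of_real pi * t) = 0 \<longleftrightarrow> t \<in> \<int>"
proof
  assume "sin (of_real pi * t) = 0"
  then obtain k :: int where "of_real pi * t = of_real (of_int k * pi)"
    using sin_eq_0 by blast
  then have "t = of_int k" by (simp add: field_simps)
  then show "t \<in> \<int>" by simp
next
  assume "t \<in> \<int>"
  then obtain k :: int where "t = of_int k" by (auto elim: Ints_cases)
  then show "sin (of_real pi * t) = 0"
    by (auto simp: sin_eq_0 mult.commute)
qed

lemma abs_sinh_Im_le_norm_sin:
  fixes z :: complex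
  shows "\<bar>sinh (Im z)\<bar> \<le> norm (sin z)"
proof -
  have "\<bar>sinh (Im z)\<bar> = \<bar>norm (exp (- (\<i> * z))) - norm (exp (\<i> * z))\<bar> / 2"
    by (simp add: sinh_field_def)
  also have "\<dots> \<le> norm (exp (\<i> * z) - exp (- (\<i> * z))) / 2"
    using norm_triangle_ineq3[of "exp (- (\<i> * z))" "exp (\<i> * z)"] by (simp add: norm_minus_commute)
  also have "\<dots> = norm (sin z)"
    by (simp add: exp_diff_eq_sin norm_mult)
  finally show ?thesis .
qed

lemma norm_rGamma_plus1:
  fixes z :: complex
  assumes "z \<noteq> 0"
  shows "norm (rGamma (z + 1)) = norm (rGamma z) / norm z"
  using assms rGamma_plus1[of z] by (auto simp: field_simps norm_mult simp flip: norm_mult)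

lemma norm_rGamma_add_nat_le:
  fixes w :: complex
  assumes "1 \<le> Re w"
  shows "norm (rGamma (w + of_nat N)) \<le> norm (rGamma w)"
proof (induction N)
  case (Suc N)
  have "1 \<le> norm (w + of_nat N)"
    using assms complex_Re_le_cmod[of "w + of_nat N"] by simp
  then have "norm (rGamma (w + of_nat N + 1)) \<le> norm (rGamma (w + of_nat N))"
    by (subst norm_rGamma_plus1) (auto simp: divide_le_eq mult_le_cancel_left1)
  then show ?case using Suc.IH by (simp add: add_ac)
qed simp

lemma norm_rGamma_bounded_horizontal:
  fixes y :: real
  obtains M where "\<And>z. 1 \<le> Re z \<Longrightarrow> Im z = y \<Longrightarrow> norm (rGamma z) \<le> M"
proof -
  have "compact ((\<lambda>s. rGamma (Complex s y)) ` {1..2})"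
    unfolding Complex_eq
    by (intro compact_continuous_image continuous_at_imp_continuous_on ballI continuous_intros) auto
  then obtain M where M: "\<And>s. s \<in> {1..2} \<Longrightarrow> norm (rGamma (Complex s y)) \<le> M"
    by (meson compact_imp_bounded bounded_iff image_eqI)
  show ?thesis
  proof (rule that)
    fix z :: complex assume z: "1 \<le> Re z" "Im z = y"
    define N where "N = nat \<lfloor>Re z - 1\<rfloor>"
    define w where "w = z - of_nat N"
    have w: "Re w \<in> {1..2}" "Im w = y"
      using z unfolding w_def N_def by (auto simp: of_nat_nat) linarith+
    have "norm (rGamma z) = norm (rGamma (w + of_nat N))" unfolding w_def by simp
    also have "\<dots> \<le> norm (rGamma w)" using w by (intro norm_rGamma_add_nat_le) auto
    also have "\<dots> \<le> M" using M[OF w(1)] w(2) by (metis complex.collapse)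
    finally show "norm (rGamma z) \<le> M" .
  qed
qed

lemma norm_pochhammer_ge_1:
  fixes z :: complex
  assumes "1 \<le> Re z"
  shows "1 \<le> norm (pochhammer z m)"
  using assms
proof (induction m arbitrary: z)
  case (Suc m)
  have "1 \<le> norm z" using Suc.prems complex_Re_le_cmod[of z] by linarith
  moreover have "1 \<le> norm (pochhammer (z + 1) m)" using Suc.IH[of "z + 1"] Suc.prems by simp
  ultimately have "1 * 1 \<le> norm z * norm (pochhammer (z + 1) m)"
    by (intro mult_mono) auto
  then show ?case by (simp add: pochhammer_rec norm_mult)
qed simp

lemma Re_le_norm_pochhammer:
  fixes w :: complex
  assumes "1 \<le> Re w"
  shows "Re w \<le> norm (pochhammer w (Suc n))"
proof -
  have "Re w * 1 \<le> norm w * norm (pochhammer (w + 1) n)"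
    using assms norm_pochhammer_ge_1[of "w + 1" n] complex_Re_le_cmod[of w] by (intro mult_mono) auto
  then show ?thesis by (simp add: pochhammer_rec norm_mult)
qed

lemma rGamma_reflection_pochhammer:
  fixes t :: complex
  shows "rGamma (t + 1) * rGamma (of_nat n - t + 1) * pochhammer (- t) (Suc n) = - sin (of_real pi * t) / of_real pi"
proof -
  have "rGamma (- t) * rGamma (1 - (- t)) = sin (of_real pi * (- t)) / of_real pi"
    by (rule rGamma_reflection_complex)
  moreover have "rGamma (- t) = pochhammer (- t) (Suc n) * rGamma (of_nat n - t + 1)"
    using pochhammer_rGamma[of "- t" "Suc n"] by (simp add: add_ac)
  ultimately show ?thesis by (simp add: mult_ac add_ac)
qed

lemma integrandI_top_eq:
  assumes "1 \<le> a" and "sin (of_real pi * t) \<noteq> 0"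
  shows "integrandI a n (a - 1) v t = of_nat (fact n) ^ a * (- 1 / pochhammer (- t) (Suc n)) ^ (a - 1)
    * rGamma (of_nat n - t + 1) * (of_real pi / sin (of_real pi * t)) * exp (\<i> * of_real pi * t * of_real v)"
proof -
  define g where "g = rGamma (of_nat n - t + 1)"
  define q where "q = of_real pi / sin (of_real pi * t)"
  define P where "P = pochhammer (- t) (Suc n)"
  have refl: "rGamma (t + 1) * g * P = - sin (of_real pi * t) / of_real pi"
    unfolding g_def P_def by (rule rGamma_reflection_pochhammer)
  with assms(2) have "P \<noteq> 0" by auto
  with refl assms(2) have "rGamma (t + 1) * g * q = - 1 / P"
    unfolding q_def by (auto simp: field_simps)
  moreover have "rGamma (t + 1) ^ (a - 1) * g ^ a * q ^ a = (rGamma (t + 1) * g * q) ^ (a - 1) * g * q"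
    using assms(1) by (cases a) (simp_all add: power_mult_distrib mult_ac)
  ultimately show ?thesis
    using assms(1) unfolding integrandI_rGamma by (simp add: g_def q_def P_def mult_ac)
qed

lemma integrandI_top_inverse_square_bound:
  assumes "2 \<le> a" and "y \<noteq> 0"
  obtains K where "\<And>t. Im t = y \<Longrightarrow> Re t \<le> -1 \<Longrightarrow> norm (integrandI a n (a - 1) v t) \<le> K / (Re t) ^ 2"
proof -
  obtain M where M: "\<And>z. 1 \<le> Re z \<Longrightarrow> Im z = - y \<Longrightarrow> norm (rGamma z) \<le> M"
    using norm_rGamma_bounded_horizontal by blast
  define c where "c = \<bar>sinh (pi * y)\<bar>"
  have c: "0 < c" using assms(2) by (simp add: c_def)
  define N where "N = (fact n :: real) ^ a"
  define e where "e = exp (- (pi * v * y))"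
  show ?thesis
  proof (rule that)
    fix t :: complex assume ty: "Im t = y" and tx: "Re t \<le> -1"
    define x where "x = - Re t"
    have x: "1 \<le> x" using tx by (simp add: x_def)
    define s where "s = sin (of_real pi * t)"
    have "c \<le> norm s"
      using abs_sinh_Im_le_norm_sin[of "of_real pi * t"] ty by (simp add: c_def s_def)
    then have s: "norm (of_real pi / s) \<le> pi / c" and "s \<noteq> 0"
      using c by (auto simp: norm_divide intro!: divide_left_mono mult_pos_pos)
    define P where "P = pochhammer (- t) (Suc n)"
    have "x \<le> norm P" unfolding P_def x_def using Re_le_norm_pochhammer[of "- t" n] x x_def by simp
    then have "norm (- 1 / P) \<le> 1 / x" and "norm (- 1 / P) \<le> 1"
      using x by (auto simp: norm_divide divide_simps)
    then have P: "norm ((- 1 / P) ^ (a - 1)) \<le> 1 / x"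
      using assms(1) power_decreasing[of 1 "a - 1" "norm (- 1 / P)"] by (force simp: norm_power)
    define w where "w = of_nat n - t"
    have w: "1 \<le> Re w" "Im w = - y" "x \<le> norm w"
      using x ty complex_Re_le_cmod[of w] by (auto simp: w_def x_def)
    then have "w \<noteq> 0" by auto
    then have "norm (rGamma (of_nat n - t + 1)) = norm (rGamma w) / norm w"
      using norm_rGamma_plus1[of w] by (simp add: w_def)
    also have "\<dots> \<le> M / x"
      using M[OF w(1,2)] w x by (intro frac_le) (auto intro: order_trans[OF norm_ge_zero])
    finally have g: "norm (rGamma (of_nat n - t + 1)) \<le> M / x" .
    txt \<open>One factor \<open>1/|Re t|\<close> comes from \<open>(-1/P)^{a-1}\<close> (this needs \<open>a \<ge> 2\<close>), the other
      from \<open>rGamma (n - t + 1) = rGamma (n - t) / (n - t)\<close>.\<close>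
    have "norm (integrandI a n (a - 1) v t) = N * norm ((- 1 / P) ^ (a - 1))
        * norm (rGamma (of_nat n - t + 1)) * norm (of_real pi / s) * e"
      using assms(1) \<open>s \<noteq> 0\<close> ty
      by (subst integrandI_top_eq) (simp_all add: P_def s_def N_def e_def norm_mult norm_power norm_divide mult_ac)
    also have "\<dots> \<le> N * (1 / x) * (M / x) * (pi / c) * e"
      using P g s x order_trans[OF norm_ge_zero g]
      by (intro mult_right_mono mult_mono mult_left_mono) (auto simp: N_def e_def zero_le_divide_iff)
    also have "\<dots> = N * M * pi * e / c / (Re t) ^ 2"
      by (simp add: x_def power2_eq_square)
    finally show "norm (integrandI a n (a - 1) v t) \<le> N * M * pi * e / c / (Re t) ^ 2" .
  qed
qed

lemma integral_at_top_convergent_inverse_square: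
  fixes \<psi> :: "real \<Rightarrow> complex"
  assumes cont: "continuous_on {b..} \<psi>" and b: "1 \<le> b"
    and bound: "\<And>s. b \<le> s \<Longrightarrow> norm (\<psi> s) \<le> K / s ^ 2"
  shows "\<exists>L. ((\<lambda>R. integral {b..R} \<psi>) \<longlongrightarrow> L) at_top"
proof -
  have "((\<lambda>x. K * (1 / x ^ 2)) has_integral K * (1 / (real (2 - 1) * b ^ (2 - 1)))) {b..}"
    using b by (intro has_integral_mult_right has_integral_inverse_power_to_inf) auto
  then have majorant: "(\<lambda>x. K / x ^ 2) integrable_on {b..}"
    by (auto simp: integrable_on_def)
  have "\<psi> \<in> borel_measurable (lebesgue_on {b..})"
    by (rule continuous_imp_measurable_on_sets_lebesgue[OF cont]) simp
  then have abs_int: "\<psi> absolutely_integrable_on {b..}"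
    by (rule measurable_bounded_by_integrable_imp_absolutely_integrable[OF _ _ majorant])
      (use bound in auto)
  have "((\<lambda>R. set_lebesgue_integral lebesgue {b..R} \<psi>) \<longlongrightarrow> set_lebesgue_integral lebesgue {b..} \<psi>) at_top"
    by (rule tendsto_set_lebesgue_integral_at_top[OF _ abs_int]) simp
  moreover have "eventually (\<lambda>R. set_lebesgue_integral lebesgue {b..R} \<psi> = integral {b..R} \<psi>) at_top"
  proof (rule eventually_at_top_linorderI[of b])
    fix R assume "b \<le> R"
    have "\<psi> absolutely_integrable_on {b..R}"
      by (rule set_integrable_subset[OF abs_int]) auto
    then show "set_lebesgue_integral lebesgue {b..R} \<psi> = integral {b..R} \<psi>"
      by (rule set_lebesgue_integral_eq_integral(2))
  qed
  ultimately show ?thesis by (blast intro: Lim_transform_eventually)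
qed

lemma contour_integral_horizontal_linepath:
  fixes f :: "complex \<Rightarrow> complex"
  assumes "p < q"
  shows "contour_integral (linepath (Complex p y) (Complex q y)) f =
         integral {p..q} (\<lambda>x. f (Complex x y))"
proof -
  have "linepath (Complex p y) (Complex q y) = (+) (\<i> * of_real y) \<circ> linepath (of_real p) (of_real q)"
    by (rule ext) (simp add: linepath_def complex_eq_iff algebra_simps)
  then have "contour_integral (linepath (Complex p y) (Complex q y)) f =
        contour_integral (linepath (of_real p) (of_real q)) (\<lambda>x. f (x + \<i> * of_real y))"
    by (simp only: contour_integral_translate)
  also have "\<dots> = integral {p..q} (\<lambda>x. f (Complex x y))"
    using assms by (subst contour_integral_linepath_Reals_eq) (auto simp: Complex_eq add.commute)
  finally show ?thesis .
qed

lemma horizontal_ray_integral_convergent: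
  fixes f :: "complex \<Rightarrow> complex" and y c :: real
  assumes cont: "continuous_on {t. Im t = y} f" and c: "0 \<le> c"
    and bound: "\<And>t. Im t = y \<Longrightarrow> Re t \<le> -1 \<Longrightarrow> norm (f t) \<le> K / (Re t) ^ 2"
  shows "\<exists>L. ((\<lambda>R. contour_integral (linepath (Complex (-R) y) (Complex c y)) f) \<longlongrightarrow> L) at_top"
proof -
  define \<psi> where "\<psi> = (\<lambda>s::real. f (Complex (- s) y))"
  have cont_\<psi>: "continuous_on UNIV \<psi>"
    unfolding \<psi>_def Complex_eq
    by (rule continuous_on_compose2[OF cont]) (auto intro!: continuous_intros)
  have bound_\<psi>: "norm (\<psi> s) \<le> K / s ^ 2" if "1 \<le> s" for s
    using bound[of "Complex (- s) y"] that by (simp add: \<psi>_def)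
  obtain L where L: "((\<lambda>R. integral {1..R} \<psi>) \<longlongrightarrow> L) at_top"
    using integral_at_top_convergent_inverse_square[of 1 \<psi> K] cont_\<psi> bound_\<psi> continuous_on_subset
    by blast
  have "eventually (\<lambda>R. integral {-c..1} \<psi> + integral {1..R} \<psi> =
      contour_integral (linepath (Complex (-R) y) (Complex c y)) f) at_top"
  proof (rule eventually_at_top_linorderI[of 1])
    fix R :: real assume R: "1 \<le> R"
    have "contour_integral (linepath (Complex (-R) y) (Complex c y)) f = integral {-R..c} (\<lambda>x. f (Complex x y))"
      using R c by (intro contour_integral_horizontal_linepath) simp
    also have "\<dots> = integral {-c..R} \<psi>"
      using Henstock_Kurzweil_Integration.integral_reflect_real[of R "-c" \<psi>] by (simp add: \<psi>_def)
    also have "\<dots> = integral {-c..1} \<psi> + integral {1..R} \<psi>"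
      using R c by (intro Henstock_Kurzweil_Integration.integral_combine[symmetric] integrable_continuous_real
          continuous_on_subset[OF cont_\<psi>]) auto
    finally show "integral {-c..1} \<psi> + integral {1..R} \<psi> =
      contour_integral (linepath (Complex (-R) y) (Complex c y)) f" by simp
  qed
  moreover have "((\<lambda>R. integral {-c..1} \<psi> + integral {1..R} \<psi>) \<longlongrightarrow> integral {-c..1} \<psi> + L) at_top"
    by (intro tendsto_intros L)
  ultimately show ?thesis by (blast intro: Lim_transform_eventually)
qed

lemma continuous_on_integrandI: "continuous_on (- \<int>) (integrandI a n j v)"
  unfolding integrandI_rGamma
  by (intro continuous_at_imp_continuous_on ballI continuous_intros) (auto simp: sin_pi_times_eq_0_iff)

lemma horizontal_segment_subset_non_Ints:
  assumes "y \<noteq> 0"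
  shows "closed_segment (Complex p y) (Complex q y) \<subseteq> - \<int>"
  using assms by (auto simp: closed_segment_same_Im elim: Ints_cases)

lemma half_integer_vertical_segment_subset_non_Ints:
  "closed_segment (Complex (real n + 1/2) p) (Complex (real n + 1/2) q) \<subseteq> - \<int>"
proof
  fix z assume "z \<in> closed_segment (Complex (real n + 1/2) p) (Complex (real n + 1/2) q)"
  then have Re_z: "Re z = real n + 1/2"
    by (simp add: closed_segment_same_Re)
  show "z \<in> - \<int>"
  proof
    assume "z \<in> \<int>"
    then obtain k where "z = of_int k" by (auto elim: Ints_cases)
    with Re_z have "real_of_int (2 * k) = real_of_int (2 * int n + 1)" by simp
    then have "2 * k = 2 * int n + 1" by (simp only: of_int_eq_iff)
    then show False by presburger
  qed
qed

lemma loopL_split: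
  assumes cont: "continuous_on (- \<int>) f"
  shows "f contour_integrable_on loopL n R"
    and "contour_integral (loopL n R) f =
       contour_integral (linepath (Complex (-R) (-1/2)) (Complex (real n + 1/2) (-1/2))) f
     + contour_integral (linepath (Complex (real n + 1/2) (-1/2)) (Complex (real n + 1/2) (1/2))) f
     - contour_integral (linepath (Complex (-R) (1/2)) (Complex (real n + 1/2) (1/2))) f"
proof -
  define A where "A = Complex (-R) (-1/2)"
  define B where "B = Complex (real n + 1/2) (-1/2)"
  define C where "C = Complex (real n + 1/2) (1/2)"
  define E where "E = Complex (-R) (1/2)"
  have "continuous_on (closed_segment A B) f" "continuous_on (closed_segment B C) f"
    "continuous_on (closed_segment C E) f"
    unfolding A_def B_def C_def E_def
    by (intro continuous_on_subset[OF cont] horizontal_segment_subset_non_Ints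
        half_integer_vertical_segment_subset_non_Ints; simp)+
  then have int: "f contour_integrable_on linepath A B" "f contour_integrable_on linepath B C"
    "f contour_integrable_on linepath C E" and rev: "contour_integral (linepath C E) f = - contour_integral (linepath E C) f"
    by (simp_all add: contour_integrable_continuous_linepath contour_integral_reverse_linepath)
  have loop: "loopL n R = linepath A B +++ (linepath B C +++ linepath C E)"
    unfolding loopL_def A_def B_def C_def E_def ..
  show "f contour_integrable_on loopL n R"
    unfolding loop using int by (auto intro!: contour_integrable_joinI valid_path_join)
  show "contour_integral (loopL n R) f = contour_integral (linepath A B) f
     + contour_integral (linepath B C) f - contour_integral (linepath E C) f"
    unfolding loop using int rev by (simp add: contour_integrable_joinI valid_path_join)
qed

lemma loopL_integral_convergent:
  assumes "2 \<le> a"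
  shows "\<exists>L. ((\<lambda>R. contour_integral (loopL n R) (integrandI a n (a - 1) v)) \<longlongrightarrow> L) at_top"
proof -
  define f where "f = integrandI a n (a - 1) v"
  have cont: "continuous_on (- \<int>) f" unfolding f_def by (rule continuous_on_integrandI)
  have ray: "\<exists>L. ((\<lambda>R. contour_integral (linepath (Complex (-R) y) (Complex (real n + 1/2) y)) f) \<longlongrightarrow> L) at_top"
    if y: "y \<noteq> 0" for y
  proof -
    have "{t. Im t = y} \<subseteq> - \<int>" using y by (auto elim: Ints_cases)
    moreover obtain K where "\<And>t. Im t = y \<Longrightarrow> Re t \<le> -1 \<Longrightarrow> norm (f t) \<le> K / (Re t) ^ 2"
      unfolding f_def using integrandI_top_inverse_square_bound[OF assms y] by blast
    ultimately show ?thesis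
      by (intro horizontal_ray_integral_convergent continuous_on_subset[OF cont]) auto
  qed
  obtain L1 L3
    where "((\<lambda>R. contour_integral (linepath (Complex (-R) (-1/2)) (Complex (real n + 1/2) (-1/2))) f) \<longlongrightarrow> L1) at_top"
      and "((\<lambda>R. contour_integral (linepath (Complex (-R) (1/2)) (Complex (real n + 1/2) (1/2))) f) \<longlongrightarrow> L3) at_top"
    using ray[of "-1/2"] ray[of "1/2"] by auto
  then have "((\<lambda>R. contour_integral (loopL n R) f) \<longlongrightarrow>
      L1 + contour_integral (linepath (Complex (real n + 1/2) (-1/2)) (Complex (real n + 1/2) (1/2))) f - L3) at_top"
    unfolding loopL_split(2)[OF cont] by (intro tendsto_intros)
  then show ?thesis unfolding f_def by blast
qed

lemma contour_integral_linear_combination: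
  assumes "finite A" and "\<And>k. k \<in> A \<Longrightarrow> f k contour_integrable_on g"
  shows "contour_integral g (\<lambda>t. c * (\<Sum>k\<in>A. b k * f k t)) = c * (\<Sum>k\<in>A. b k * contour_integral g (f k))"
  using assms
  by (simp add: contour_integral_lmul contour_integral_sum contour_integrable_sum contour_integrable_lmul)

lemma Lim_linear_combination:
  fixes G :: "'i \<Rightarrow> 'a \<Rightarrow> 'b :: real_normed_field"
  assumes "finite A" and "F \<noteq> bot" and "\<And>k. k \<in> A \<Longrightarrow> \<exists>L. (G k \<longlongrightarrow> L) F"
  shows "Lim F (\<lambda>x. c * (\<Sum>k\<in>A. b k * G k x)) = c * (\<Sum>k\<in>A. b k * Lim F (G k))"
proof -
  have "(G k \<longlongrightarrow> Lim F (G k)) F" if "k \<in> A" for k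
    using assms(3)[OF that] tendsto_Lim[OF assms(2)] by metis
  then have "((\<lambda>x. c * (\<Sum>k\<in>A. b k * G k x)) \<longlongrightarrow> c * (\<Sum>k\<in>A. b k * Lim F (G k))) F"
    by (intro tendsto_intros)
  then show ?thesis using assms(2) by (simp add: tendsto_Lim)
qed

theorem lemma5:
  fixes a \<mu> n :: nat and u :: real
  assumes "a \<ge> 2" and "\<mu> \<le> a - 1"
  shows "Iint a n \<mu> u =
    1 / (2 * of_real pi * \<i>) ^ (a - \<mu> - 1) *
    (\<Sum>k = 0..a - \<mu> - 1. (-1) ^ k * of_nat ((a - \<mu> - 1) choose k) *
        Iint a n (a - 1) (real a + u - real \<mu> - 1 - 2 * real k))"
proof -
  define c :: complex where "c = 1 / (2 * of_real pi * \<i>) ^ (a - \<mu> - 1)"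
  define b :: "nat \<Rightarrow> complex" where "b k = (-1) ^ k * of_nat ((a - \<mu> - 1) choose k)" for k
  define f where "f k = integrandI a n (a - 1) (real a + u - real \<mu> - 1 - 2 * real k)" for k
  define K where "K = {0..a - \<mu> - 1}"
  define J where "J g = Lim at_top (\<lambda>R. contour_integral (loopL n R) g)" for g
  have "integrandI a n \<mu> u = (\<lambda>t. c * (\<Sum>k\<in>K. b k * f k t))"
    using assms integrandI_binomial_identity[of \<mu> a n u]
    unfolding c_def b_def f_def K_def by fastforce
  then have "J (integrandI a n \<mu> u) = Lim at_top (\<lambda>R. c * (\<Sum>k\<in>K. b k * contour_integral (loopL n R) (f k)))"
    unfolding J_def K_def f_def
    by (simp only: contour_integral_linear_combination finite_atLeastAtMost loopL_split(1)[OF continuous_on_integrandI])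
  txt \<open>Only the integrals for \<open>j = a - 1\<close> are shown to converge; the one on the left then
    converges by linearity, so no junk value of \<open>Lim\<close> is involved.\<close>
  also have "\<dots> = c * (\<Sum>k\<in>K. b k * J (f k))"
    unfolding J_def K_def f_def using assms(1)
    by (intro Lim_linear_combination loopL_integral_convergent) auto
  finally show ?thesis
    unfolding Iint_def J_def[symmetric] c_def b_def f_def K_def
    by (simp add: sum_distrib_left mult_ac)
qed

end
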